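(* Let $I\subset K[x_1,\ldots,x_n]$ be a nonzero graded ideal with generic tropical variety $\mathrm{gT}(I)$. If $\omega\in\mathrm{gT}(I)$, then $\sigma(\omega)\in\mathrm{gT}(I)$ for every $\sigma\in S_n$.
   Context: $K$ is an algebraically closed field of characteristic $0$ with trivial valuation. Each $g=(g_{ij})\in\mathrm{GL}_n(K)$ acts on $K[x_1,\ldots,x_n]$ by $x_i\mapsto\sum_j g_{ij}x_j$; $\mathrm{GL}_n(K)$ has the Zariski topology. For $f=\sum_\nu a_\nu x^\nu$ and $\omega\in\mathbb{R}^n$, $\mathrm{in}_\omega(f)$ is the sum of the terms with $\omega\cdot\nu$ minimal, and $T(I)=\{\omega:\mathrm{in}_\omega(f)\text{ is not a monomial for every }f\in I\}$ (viewed as a subfan of the Gröbner fan). The generic tropical variety $\mathrm{gT}(I)$ is the fan equal to $T(g(I))$ for all $g$ in some non-empty Zariski-open subset of $\mathrm{GL}_n(K)$; such a fan exists for every nonzero graded ideal (it is empty if $\dim I=0$). $S_n$ is the symmetric group, and for $\sigma\in S_n$, $\sigma(\omega)=(\omega_{\sigma(1)},\ldots,\omega_{\sigma(n)})$. *)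

theory Defs
  imports "HOL-Analysis.Analysis" "HOL-Library.Poly_Mapping" "HOL-Computational_Algebra.Polynomial"
begin

text \<open>Polynomials in the variables indexed by the finite type 'n with coefficients in 'a:
  finitely supported maps from exponent vectors (monomials) to coefficients.\<close>
type_synonym ('n, 'a) mpoly = "('n \<Rightarrow>\<^sub>0 nat) \<Rightarrow>\<^sub>0 'a"

definition Var :: "'n \<Rightarrow> ('n, 'a::comm_ring_1) mpoly" where
  "Var i = Poly_Mapping.single (Poly_Mapping.single i 1) 1"

definition Const :: "'a::comm_ring_1 \<Rightarrow> ('n, 'a) mpoly" where
  "Const c = Poly_Mapping.single 0 c"

definition mdeg :: "('n::finite \<Rightarrow>\<^sub>0 nat) \<Rightarrow> nat" where
  "mdeg m = (\<Sum>i\<in>UNIV. Poly_Mapping.lookup m i)"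

definition hcomp :: "nat \<Rightarrow> ('n::finite, 'a::comm_ring_1) mpoly \<Rightarrow> ('n, 'a) mpoly" where
  "hcomp d f = Poly_Mapping.mapp (\<lambda>m c. if mdeg m = d then c else 0) f"

definition is_ideal :: "('n, 'a::comm_ring_1) mpoly set \<Rightarrow> bool" where
  "is_ideal I \<longleftrightarrow> 0 \<in> I \<and> (\<forall>f\<in>I. \<forall>g\<in>I. f + g \<in> I) \<and> (\<forall>f\<in>I. \<forall>h. h * f \<in> I)"

definition graded_ideal :: "('n::finite, 'a::comm_ring_1) mpoly set \<Rightarrow> bool" where
  "graded_ideal I \<longleftrightarrow> is_ideal I \<and> (\<forall>f\<in>I. \<forall>d. hcomp d f \<in> I)"

definition subst :: "('n::finite \<Rightarrow> ('n, 'a::comm_ring_1) mpoly) \<Rightarrow> ('n, 'a) mpoly \<Rightarrow> ('n, 'a) mpoly" where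
  "subst \<phi> f = (\<Sum>m\<in>Poly_Mapping.keys f. Const (Poly_Mapping.lookup f m) * (\<Prod>i\<in>UNIV. \<phi> i ^ Poly_Mapping.lookup m i))"

definition mp_eval :: "('v::finite, 'a::comm_ring_1) mpoly \<Rightarrow> ('v \<Rightarrow> 'a) \<Rightarrow> 'a" where
  "mp_eval p a = (\<Sum>m\<in>Poly_Mapping.keys p. Poly_Mapping.lookup p m * (\<Prod>i\<in>UNIV. a i ^ Poly_Mapping.lookup m i))"

definition lin_act :: "'a::field^'n::finite^'n \<Rightarrow> ('n, 'a) mpoly \<Rightarrow> ('n, 'a) mpoly" where
  "lin_act g f = subst (\<lambda>i. \<Sum>j\<in>UNIV. Const (g$i$j) * Var j) f"

definition wdot :: "('n::finite \<Rightarrow> real) \<Rightarrow> ('n \<Rightarrow>\<^sub>0 nat) \<Rightarrow> real" where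
  "wdot \<omega> \<nu> = (\<Sum>i\<in>UNIV. \<omega> i * real (Poly_Mapping.lookup \<nu> i))"

definition in_form :: "('n::finite \<Rightarrow> real) \<Rightarrow> ('n, 'a::comm_ring_1) mpoly \<Rightarrow> ('n, 'a) mpoly" where
  "in_form \<omega> f = Poly_Mapping.mapp
     (\<lambda>m c. if wdot \<omega> m = Min (wdot \<omega> ` Poly_Mapping.keys f) then c else 0) f"

definition is_monomial :: "('n, 'a::comm_ring_1) mpoly \<Rightarrow> bool" where
  "is_monomial f \<longleftrightarrow> card (Poly_Mapping.keys f) = 1"

definition trop :: "('n::finite, 'a::comm_ring_1) mpoly set \<Rightarrow> ('n \<Rightarrow> real) set" where
  "trop I = {\<omega>. \<forall>f\<in>I. \<not> is_monomial (in_form \<omega> f)}"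

text \<open>Zariski-open subsets of GL_n(K): complements in GL_n of common zero sets of
  families of polynomials in the n^2 matrix entries.\<close>
definition zariski_open_GL :: "('a::field^'n::finite^'n) set \<Rightarrow> bool" where
  "zariski_open_GL U \<longleftrightarrow> (\<exists>P :: ('n \<times> 'n, 'a) mpoly set.
     U = {g. invertible g \<and> (\<exists>p\<in>P. mp_eval p (\<lambda>(i,j). g$i$j) \<noteq> 0)})"

definition is_generic_trop_var ::
  "('n::finite, 'a::field) mpoly set \<Rightarrow> ('n \<Rightarrow> real) set \<Rightarrow> bool" where
  "is_generic_trop_var I F \<longleftrightarrow> (\<exists>U :: ('a^'n^'n) set. zariski_open_GL U \<and> U \<noteq> {} \<and>
     (\<forall>g\<in>U. trop (lin_act g ` I) = F))"

end

theory Submission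
  imports Defs
begin

text \<open>Permuting the columns of g by \<sigma> amounts to renaming the variables after acting by g,
  and renaming variables permutes the coordinates of every tropical variety. So it suffices to
  find a single g such that both g and its column permutation lie in the Zariski-open set U on
  which the tropical variety is generic: restricted to a line, membership in U fails only at the
  roots of finitely many nonzero univariate polynomials, and K is infinite.\<close>

lemma mp_eval_linear_poly:
  fixes p :: "('v::finite, 'a::field) mpoly"
  shows "\<exists>D. \<forall>t. mp_eval p (\<lambda>v. \<alpha> v + t * \<beta> v) = poly D t"
proof -
  let ?D = "\<Sum>m\<in>Poly_Mapping.keys p. [:Poly_Mapping.lookup p m:] * (\<Prod>i\<in>UNIV. [:\<alpha> i, \<beta> i:] ^ Poly_Mapping.lookup m i)"
  show ?thesis
    by (rule exI[of _ ?D]) (simp add: mp_eval_def poly_sum poly_prod algebra_simps)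
qed

lemma det_linear_poly:
  fixes A B :: "'a::field^'n::finite^'n"
  shows "\<exists>D. \<forall>t. det (\<chi> i j. A$i$j + t * B$i$j) = poly D t"
proof -
  let ?D = "\<Sum>p\<in>{p. p permutes (UNIV::'n set)}. [:of_int (sign p):] * (\<Prod>i\<in>UNIV. [:A$i$(p i), B$i$(p i):])"
  show ?thesis
    by (rule exI[of _ ?D]) (simp add: det_def poly_sum poly_prod algebra_simps)
qed

lemma zariski_open_GL_cofinite_on_line:
  fixes U :: "('a::field^'n::finite^'n) set"
  assumes "zariski_open_GL U" and "(\<chi> i j. A$i$j + t\<^sub>0 * B$i$j) \<in> U"
  shows "finite {t. (\<chi> i j. A$i$j + t * B$i$j) \<notin> U}"
proof -
  let ?L = "\<lambda>t. (\<chi> i j. A$i$j + t * B$i$j) :: 'a^'n^'n"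
  obtain P :: "('n \<times> 'n, 'a) mpoly set"
    where U: "U = {g. invertible g \<and> (\<exists>p\<in>P. mp_eval p (\<lambda>(i,j). g$i$j) \<noteq> 0)}"
    using assms(1) unfolding zariski_open_GL_def by blast
  then obtain p where "p \<in> P" and inv0: "det (?L t\<^sub>0) \<noteq> 0"
    and p0: "mp_eval p (\<lambda>(i,j). A$i$j + t\<^sub>0 * B$i$j) \<noteq> 0"
    using assms(2) by (auto simp: invertible_det_nz case_prod_beta')
  obtain D\<^sub>p where D\<^sub>p: "mp_eval p (\<lambda>(i,j). A$i$j + t * B$i$j) = poly D\<^sub>p t" for t
    using mp_eval_linear_poly[of p "\<lambda>(i,j). A$i$j" "\<lambda>(i,j). B$i$j"]
    by (auto simp: case_prod_beta')
  obtain D\<^sub>d where D\<^sub>d: "det (?L t) = poly D\<^sub>d t" for t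
    using det_linear_poly by blast
  have "D\<^sub>p \<noteq> 0" "D\<^sub>d \<noteq> 0"
    using p0 inv0 D\<^sub>p D\<^sub>d by auto
  then have "finite ({t. poly D\<^sub>p t = 0} \<union> {t. poly D\<^sub>d t = 0})"
    by (simp add: poly_roots_finite)
  moreover have "{t. ?L t \<notin> U} \<subseteq> {t. poly D\<^sub>p t = 0} \<union> {t. poly D\<^sub>d t = 0}"
    using \<open>p \<in> P\<close> D\<^sub>p D\<^sub>d by (auto simp: U invertible_det_nz case_prod_beta')
  ultimately show ?thesis
    by (rule finite_subset[rotated])
qed

definition mon_rename :: "('n \<Rightarrow> 'n) \<Rightarrow> ('n \<Rightarrow>\<^sub>0 nat) \<Rightarrow> ('n \<Rightarrow>\<^sub>0 nat)" where
  "mon_rename \<pi> m = Poly_Mapping.map_key \<pi> m"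

definition poly_rename :: "('n \<Rightarrow> 'n) \<Rightarrow> ('n, 'a::comm_ring_1) mpoly \<Rightarrow> ('n, 'a) mpoly" where
  "poly_rename \<pi> f = Poly_Mapping.map_key (mon_rename \<pi>) f"

lemma lookup_mon_rename: "bij \<pi> \<Longrightarrow> Poly_Mapping.lookup (mon_rename \<pi> m) i = Poly_Mapping.lookup m (\<pi> i)"
  by (simp add: mon_rename_def Poly_Mapping.map_key.rep_eq bij_is_inj)

lemma mon_rename_add: "bij \<pi> \<Longrightarrow> mon_rename \<pi> (a + b) = mon_rename \<pi> a + mon_rename \<pi> b"
  by (rule poly_mapping_eqI) (simp add: lookup_mon_rename lookup_add)

lemma mon_rename_0: "bij \<pi> \<Longrightarrow> mon_rename \<pi> 0 = 0"
  by (rule poly_mapping_eqI) (simp add: lookup_mon_rename)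

lemma mon_rename_mon_rename_inv: "bij \<pi> \<Longrightarrow> mon_rename \<pi> (mon_rename (inv \<pi>) m) = m"
  by (rule poly_mapping_eqI) (simp add: lookup_mon_rename bij_imp_bij_inv inv_f_f[OF bij_is_inj] surj_f_inv_f[OF bij_is_surj])

lemma mon_rename_inv_mon_rename: "bij \<pi> \<Longrightarrow> mon_rename (inv \<pi>) (mon_rename \<pi> m) = m"
  by (rule poly_mapping_eqI) (simp add: lookup_mon_rename bij_imp_bij_inv inv_f_f[OF bij_is_inj] surj_f_inv_f[OF bij_is_surj])

lemma bij_mon_rename: "bij \<pi> \<Longrightarrow> bij (mon_rename \<pi>)"
  by (rule bij_betw_byWitness[where f'="mon_rename (inv \<pi>)"]) (auto simp: mon_rename_mon_rename_inv mon_rename_inv_mon_rename)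

lemma mon_rename_single: "bij \<pi> \<Longrightarrow> mon_rename \<pi> (Poly_Mapping.single (\<pi> j) 1) = Poly_Mapping.single j 1"
  by (rule poly_mapping_eqI) (simp add: lookup_mon_rename lookup_single when_def bij_is_inj inj_eq)

lemma lookup_poly_rename: "bij \<pi> \<Longrightarrow> Poly_Mapping.lookup (poly_rename \<pi> f) m = Poly_Mapping.lookup f (mon_rename \<pi> m)"
  by (simp add: poly_rename_def Poly_Mapping.map_key.rep_eq bij_is_inj bij_mon_rename)

lemma keys_poly_rename: "bij \<pi> \<Longrightarrow> Poly_Mapping.keys (poly_rename \<pi> f) = mon_rename \<pi> -` Poly_Mapping.keys f"
  by (auto simp: in_keys_iff lookup_poly_rename)

lemma poly_rename_add: "bij \<pi> \<Longrightarrow> poly_rename \<pi> (a + b) = poly_rename \<pi> a + poly_rename \<pi> b"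
  by (rule poly_mapping_eqI) (simp add: lookup_poly_rename lookup_add)

lemma poly_rename_0: "bij \<pi> \<Longrightarrow> poly_rename \<pi> 0 = 0"
  by (rule poly_mapping_eqI) (simp add: lookup_poly_rename)

lemma poly_rename_1: "bij \<pi> \<Longrightarrow> poly_rename \<pi> (1::('n,'a::comm_ring_1) mpoly) = 1"
proof -
  assume b: "bij \<pi>"
  have "mon_rename \<pi> k = 0 \<longleftrightarrow> k = 0" for k
    by (metis b mon_rename_0 mon_rename_inv_mon_rename bij_imp_bij_inv)
  thus ?thesis by (intro poly_mapping_eqI) (simp add: lookup_poly_rename b lookup_one when_def)
qed

lemma poly_rename_mult: "bij \<pi> \<Longrightarrow> poly_rename \<pi> (a * b) = poly_rename \<pi> a * (poly_rename \<pi> b :: ('n,'a::comm_ring_1) mpoly)"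
proof (rule poly_mapping_eqI)
  fix k
  assume b: "bij \<pi>"
  have bm: "bij (mon_rename \<pi>)" using b by (rule bij_mon_rename)
  have eq: "(mon_rename \<pi> k = mon_rename \<pi> l + mon_rename \<pi> q) \<longleftrightarrow> (k = l + q)" for l q
    by (metis b bm bij_is_inj inj_eq mon_rename_add)
  have "Poly_Mapping.lookup (poly_rename \<pi> (a*b)) k =
     (\<Sum>l. Poly_Mapping.lookup a l * (\<Sum>q. Poly_Mapping.lookup b q when mon_rename \<pi> k = l + q))"
    by (simp add: lookup_poly_rename b lookup_mult)
  also have "\<dots> = (\<Sum>l. Poly_Mapping.lookup a (mon_rename \<pi> l) * (\<Sum>q. Poly_Mapping.lookup b q when mon_rename \<pi> k = mon_rename \<pi> l + q))"
    by (rule Sum_any.reindex_cong[OF bm]) (simp add: o_def)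
  also have "\<dots> = (\<Sum>l. Poly_Mapping.lookup a (mon_rename \<pi> l) * (\<Sum>q. Poly_Mapping.lookup b (mon_rename \<pi> q) when mon_rename \<pi> k = mon_rename \<pi> l + mon_rename \<pi> q))"
    by (intro Sum_any.cong arg_cong2[where f="(*)"] refl Sum_any.reindex_cong[OF bm]) (simp add: o_def)
  also have "\<dots> = Poly_Mapping.lookup (poly_rename \<pi> a * poly_rename \<pi> b) k"
    by (simp add: lookup_poly_rename b lookup_mult eq)
  finally show "Poly_Mapping.lookup (poly_rename \<pi> (a*b)) k = Poly_Mapping.lookup (poly_rename \<pi> a * poly_rename \<pi> b) k" .
qed

lemma poly_rename_sum: "bij \<pi> \<Longrightarrow> poly_rename \<pi> (\<Sum>x\<in>A. h x) = (\<Sum>x\<in>A. poly_rename \<pi> (h x))"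
  by (induction A rule: infinite_finite_induct) (simp_all add: poly_rename_0 poly_rename_add)

lemma poly_rename_prod: "bij \<pi> \<Longrightarrow> poly_rename \<pi> (\<Prod>x\<in>A. h x) = (\<Prod>x\<in>A. poly_rename \<pi> (h x :: ('n,'a::comm_ring_1) mpoly))"
  by (induction A rule: infinite_finite_induct) (simp_all add: poly_rename_1 poly_rename_mult)

lemma poly_rename_power: "bij \<pi> \<Longrightarrow> poly_rename \<pi> (h ^ n) = (poly_rename \<pi> (h :: ('n,'a::comm_ring_1) mpoly)) ^ n"
  by (induction n) (simp_all add: poly_rename_1 poly_rename_mult)

lemma poly_rename_Const: "bij \<pi> \<Longrightarrow> poly_rename \<pi> (Const c :: ('n,'a::comm_ring_1) mpoly) = Const c"
  unfolding poly_rename_def Const_def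
  by (metis Poly_Mapping.map_key_single bij_is_inj bij_mon_rename mon_rename_0)

lemma poly_rename_Var: "bij \<pi> \<Longrightarrow> poly_rename \<pi> (Var j :: ('n,'a::comm_ring_1) mpoly) = Var (\<pi> j)"
  unfolding poly_rename_def Var_def
  by (metis Poly_Mapping.map_key_single bij_is_inj bij_mon_rename mon_rename_single)

lemma poly_rename_subst: "bij \<pi> \<Longrightarrow> poly_rename \<pi> (subst \<phi> f) = subst (\<lambda>i. poly_rename \<pi> (\<phi> i)) (f :: ('n::finite,'a::comm_ring_1) mpoly)"
  unfolding subst_def by (simp add: poly_rename_sum poly_rename_mult poly_rename_prod poly_rename_power poly_rename_Const)

lemma poly_rename_lin_act:
  fixes g :: "'a::field^'n::finite^'n"
  assumes b: "bij \<pi>"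
  shows "lin_act (\<chi> i k. g$i$(inv \<pi> k)) f = poly_rename \<pi> (lin_act g f)"
proof -
  have "poly_rename \<pi> (\<Sum>j\<in>UNIV. Const (g$i$j) * Var j) = (\<Sum>k\<in>UNIV. Const ((\<chi> i k. g$i$(inv \<pi> k))$i$k) * Var k)" for i
  proof -
    have "poly_rename \<pi> (\<Sum>j\<in>UNIV. Const (g$i$j) * Var j) = (\<Sum>j\<in>UNIV. Const (g$i$j) * Var (\<pi> j))"
      by (simp add: b poly_rename_sum poly_rename_mult poly_rename_Const poly_rename_Var)
    also have "\<dots> = (\<Sum>k\<in>UNIV. Const (g$i$(inv \<pi> k)) * Var k)"
      by (rule sum.reindex_bij_witness[where i="inv \<pi>" and j=\<pi>])
         (auto simp: inv_f_f[OF bij_is_inj[OF b]] surj_f_inv_f[OF bij_is_surj[OF b]])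
    finally show ?thesis by simp
  qed
  thus ?thesis unfolding lin_act_def by (simp add: poly_rename_subst b)
qed

lemma wdot_mon_rename: "bij \<pi> \<Longrightarrow> wdot \<omega> (mon_rename \<pi> m) = wdot (\<omega> \<circ> inv \<pi>) m"
  unfolding wdot_def
  by (rule sum.reindex_bij_witness[where i="inv \<pi>" and j=\<pi>])
     (auto simp: lookup_mon_rename inv_f_f[OF bij_is_inj] surj_f_inv_f[OF bij_is_surj])

lemma in_form_poly_rename:
  assumes b: "bij \<pi>"
  shows "in_form (\<omega> \<circ> inv \<pi>) (poly_rename \<pi> f) = poly_rename \<pi> (in_form \<omega> (f::('n::finite,'a::comm_ring_1) mpoly))"
proof -
  have "wdot (\<omega> \<circ> inv \<pi>) ` Poly_Mapping.keys (poly_rename \<pi> f)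
      = (wdot \<omega> \<circ> mon_rename \<pi>) ` (mon_rename \<pi> -` Poly_Mapping.keys f)"
    by (rule image_cong) (simp_all add: keys_poly_rename b wdot_mon_rename)
  also have "\<dots> = wdot \<omega> ` Poly_Mapping.keys f"
    using bij_is_surj[OF bij_mon_rename[OF b]] by (simp only: image_comp[symmetric]) (simp add: image_vimage_eq)
  finally have min_eq: "wdot (\<omega> \<circ> inv \<pi>) ` (mon_rename \<pi> -` Poly_Mapping.keys f) = wdot \<omega> ` Poly_Mapping.keys f"
    by (simp add: keys_poly_rename b)
  show ?thesis
    by (rule poly_mapping_eqI)
       (simp add: in_form_def lookup_mapp lookup_poly_rename b keys_poly_rename min_eq wdot_mon_rename)
qed

lemma is_monomial_poly_rename:
  assumes b: "bij \<pi>"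
  shows "is_monomial (poly_rename \<pi> h) \<longleftrightarrow> is_monomial (h::('n,'a::comm_ring_1) mpoly)"
  unfolding is_monomial_def keys_poly_rename[OF b]
  using bij_mon_rename[OF b] by (simp add: card_vimage_inj bij_is_inj bij_is_surj)

lemma trop_poly_rename:
  assumes b: "bij \<pi>" and w: "\<omega> \<in> trop J"
  shows "\<omega> \<circ> inv \<pi> \<in> trop (poly_rename \<pi> ` (J::('n::finite,'a::comm_ring_1) mpoly set))"
  using w by (auto simp: trop_def in_form_poly_rename[OF b] is_monomial_poly_rename[OF b])


theorem theorem7p4:
  fixes I :: "('n::finite, 'a::field_char_0) mpoly set"
    and F :: "('n \<Rightarrow> real) set" and \<omega> :: "'n \<Rightarrow> real" and \<sigma> :: "'n \<Rightarrow> 'n"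
  assumes alg_closed: "\<forall>p :: 'a poly. degree p \<ge> 1 \<longrightarrow> (\<exists>x. poly p x = 0)"
    and graded: "graded_ideal I" and nonzero: "I \<noteq> {0}"
    and gT: "is_generic_trop_var I F"
    and "\<omega> \<in> F" and "\<sigma> permutes UNIV"
  shows "\<omega> \<circ> \<sigma> \<in> F"
proof -
  have \<sigma>: "bij \<sigma>" using \<open>\<sigma> permutes UNIV\<close> by (rule permutes_bij)
  obtain U :: "('a^'n^'n) set" where U: "zariski_open_GL U" and "U \<noteq> {}"
    and generic: "\<And>g. g \<in> U \<Longrightarrow> trop (lin_act g ` I) = F"
    using gT unfolding is_generic_trop_var_def by blast
  then obtain a where a: "a \<in> U" by blast
  \<comment> \<open>the line L passes through a at t = 0, and col\<sigma> \<circ> L passes through a at t = 1\<close>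
  define B :: "'a^'n^'n" where "B = (\<chi> i j. a$i$(inv \<sigma> j) - a$i$j)"
  define L :: "'a \<Rightarrow> 'a^'n^'n" where "L t = (\<chi> i j. a$i$j + t * B$i$j)" for t
  define col\<sigma> :: "'a^'n^'n \<Rightarrow> 'a^'n^'n" where "col\<sigma> g = (\<chi> i k. g$i$(\<sigma> k))" for g
  have "finite {t. L t \<notin> U}"
    using zariski_open_GL_cofinite_on_line[OF U, of a 0 B] a by (simp add: L_def)
  moreover have "finite {t. col\<sigma> (L t) \<notin> U}"
  proof -
    have "col\<sigma> (L t) = (\<chi> i k. col\<sigma> a$i$k + t * (a$i$k - col\<sigma> a$i$k))" for t
      by (simp add: L_def B_def col\<sigma>_def inv_f_f[OF bij_is_inj[OF \<sigma>]])
    then show ?thesis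
      using zariski_open_GL_cofinite_on_line[OF U, of "col\<sigma> a" 1 "\<chi> i k. a$i$k - col\<sigma> a$i$k"] a
      by simp
  qed
  ultimately have "finite ({t. L t \<notin> U} \<union> {t. col\<sigma> (L t) \<notin> U})"
    by blast
  then obtain t where "L t \<in> U" "col\<sigma> (L t) \<in> U"
    using ex_new_if_finite[OF infinite_UNIV_char_0] by blast
  then have "\<omega> \<in> trop (lin_act (L t) ` I)" and "trop (lin_act (col\<sigma> (L t)) ` I) = F"
    using \<open>\<omega> \<in> F\<close> generic by auto
  moreover have "lin_act (col\<sigma> (L t)) ` I = poly_rename (inv \<sigma>) ` lin_act (L t) ` I"
    unfolding col\<sigma>_def image_image
    by (metis poly_rename_lin_act[OF bij_imp_bij_inv[OF \<sigma>]] inv_inv_eq[OF \<sigma>])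
  ultimately show ?thesis
    using trop_poly_rename[OF bij_imp_bij_inv[OF \<sigma>]] by (metis inv_inv_eq[OF \<sigma>])
qed

end
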